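(* Let $G=(V,E)$ be a graph, $a$ a positive integer, and $V_D'\subseteq V$. Let $S_1,\dots,S_k$ be pairwise disjoint nonempty vertex sets such that, for every $u\in V_D'$, either $N^a(u)\subseteq S_i$ for some $i\in\{1,\dots,k\}$, or $N^a(u)\cap(S_1\cup\cdots\cup S_k)=\emptyset$. Let $$S=\{v\in V:\operatorname{dist}(v,S_1\cup\cdots\cup S_k)\le a\}.$$ If $G[S]$ is connected, then: 1. $N_S=\sum_{i=1}^k N_{S_i}$; 2. $D_S\le-1+\sum_{i=1}^k(D_{S_i}+2a+1)$.
   Context: $\operatorname{dist}$ is the shortest-path distance in $G$; $\operatorname{dist}(u,X)=\min_{x\in X}\operatorname{dist}(u,x)$; $N^r(v)=\{u:\operatorname{dist}(u,v)\le r\}$. For a vertex set $X$ (with $V_D'$ and $a$ fixed): - $N_X$ is the maximum size of a subset $X^*\subseteq X\cap V_D'$ such that $\operatorname{dist}(u,v)>2a$ for every pair of distinct $u,v\in X^*$; - $D_X$ is the diameter of the induced subgraph $G[X]$ (equal to $\infty$ if $G[X]$ is disconnected). *)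

theory Defs
  imports Main "HOL-Library.Extended_Nat"
begin

definition graph :: "'a set \<Rightarrow> ('a \<Rightarrow> 'a \<Rightarrow> bool) \<Rightarrow> bool" where
  "graph V E \<longleftrightarrow> finite V \<and> (\<forall>u v. E u v \<longrightarrow> u \<in> V \<and> v \<in> V)
     \<and> (\<forall>u v. E u v \<longrightarrow> E v u) \<and> (\<forall>u. \<not> E u u)"

definition walk_in :: "'a set \<Rightarrow> ('a \<Rightarrow> 'a \<Rightarrow> bool) \<Rightarrow> 'a list \<Rightarrow> bool" where
  "walk_in X E xs \<longleftrightarrow> xs \<noteq> [] \<and> set xs \<subseteq> X
     \<and> (\<forall>i < length xs - 1. E (xs ! i) (xs ! Suc i))"

text \<open>Shortest-path distance in the induced subgraph G[X] (\<infinity> if no path).\<close>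
definition dist_in :: "'a set \<Rightarrow> ('a \<Rightarrow> 'a \<Rightarrow> bool) \<Rightarrow> 'a \<Rightarrow> 'a \<Rightarrow> enat" where
  "dist_in X E u v =
     (INF xs \<in> {xs. walk_in X E xs \<and> hd xs = u \<and> last xs = v}. enat (length xs - 1))"

definition set_dist :: "'a set \<Rightarrow> ('a \<Rightarrow> 'a \<Rightarrow> bool) \<Rightarrow> 'a \<Rightarrow> 'a set \<Rightarrow> enat" where
  "set_dist V E u X = (INF x \<in> X. dist_in V E u x)"

definition nbhd :: "'a set \<Rightarrow> ('a \<Rightarrow> 'a \<Rightarrow> bool) \<Rightarrow> nat \<Rightarrow> 'a \<Rightarrow> 'a set" where
  "nbhd V E r v = {u. dist_in V E u v \<le> enat r}"

text \<open>N_X: maximum size of a subset of X \<inter> V_D' whose points are pairwise at distance > 2a.\<close>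
definition pack_num :: "'a set \<Rightarrow> ('a \<Rightarrow> 'a \<Rightarrow> bool) \<Rightarrow> 'a set \<Rightarrow> nat \<Rightarrow> 'a set \<Rightarrow> nat" where
  "pack_num V E VD a X = Max {card Y | Y. Y \<subseteq> X \<inter> VD \<and>
      (\<forall>u \<in> Y. \<forall>v \<in> Y. u \<noteq> v \<longrightarrow> dist_in V E u v > enat (2 * a))}"

text \<open>D_X: diameter of G[X] (\<infinity> if G[X] is disconnected).\<close>
definition diam :: "('a \<Rightarrow> 'a \<Rightarrow> bool) \<Rightarrow> 'a set \<Rightarrow> enat" where
  "diam E X = (SUP u \<in> X. SUP v \<in> X. dist_in X E u v)"

definition connected_in :: "('a \<Rightarrow> 'a \<Rightarrow> bool) \<Rightarrow> 'a set \<Rightarrow> bool" where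
  "connected_in E X \<longleftrightarrow> X \<noteq> {} \<and> (\<forall>u \<in> X. \<forall>v \<in> X. dist_in X E u v < \<infinity>)"

end

theory Submission
  imports Defs "HOL-Library.Disjoint_Sets"
begin

text \<open>By the separation hypothesis, a vertex of V_D'
  within distance a of some S_i has its whole a-ball inside S_i. Hence S \<inter> V_D' is the disjoint
  union of the S_i \<inter> V_D', and vertices of V_D' in different S_i are more than 2a apart (the
  midpoint of a path of length at most 2a would lie in both), so packings of the S_i combine to
  packings of S and vice versa. For the diameter, follow a shortest path in G[S]: its vertices
  in the a-thickening of S_i are pairwise at distance at most D_{S_i} + 2a, so, the path being
  geodesic, they occupy at most D_{S_i} + 2a + 1 consecutive positions; as these thickenings
  cover S, the path has at most \<Sum>(D_{S_i} + 2a + 1) vertices.\<close>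

lemma walk_in_iff_successively:
  "walk_in X E xs \<longleftrightarrow> xs \<noteq> [] \<and> set xs \<subseteq> X \<and> successively E xs"
  unfolding walk_in_def successively_conv_nth by (simp add: less_diff_conv)

lemma dist_in_le_walk: "walk_in X E xs \<Longrightarrow> dist_in X E (hd xs) (last xs) \<le> enat (length xs - 1)"
  unfolding dist_in_def by (rule INF_lower) auto

lemma dist_in_geodesicE:
  assumes "dist_in X E u v \<noteq> \<infinity>"
  obtains xs where "walk_in X E xs" "hd xs = u" "last xs = v"
    "dist_in X E u v = enat (length xs - 1)"
proof -
  let ?W = "{xs. walk_in X E xs \<and> hd xs = u \<and> last xs = v}"
  have "?W \<noteq> {}"
  proof
    assume "?W = {}"
    then have "dist_in X E u v = \<infinity>" by (simp only: dist_in_def image_empty) (simp add: top_enat_def)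
    with assms show False by simp
  qed
  then have "dist_in X E u v \<in> (\<lambda>xs. enat (length xs - 1)) ` ?W"
    unfolding dist_in_def by (auto intro: wellorder_InfI)
  then show ?thesis using that by blast
qed

lemma dist_in_refl: "u \<in> X \<Longrightarrow> dist_in X E u u = 0"
  using dist_in_le_walk[of X E "[u]"] by (simp add: walk_in_def zero_enat_def[symmetric])

lemma dist_in_antimono: "X \<subseteq> Y \<Longrightarrow> dist_in Y E u v \<le> dist_in X E u v"
  unfolding dist_in_def walk_in_def by (rule INF_superset_mono) auto

lemma dist_in_commute:
  assumes "symp E"
  shows "dist_in X E u v = dist_in X E v u"
proof -
  have le: "dist_in X E x y \<le> dist_in X E y x" for x y
  proof (cases "dist_in X E y x = \<infinity>")
    case False
    then obtain xs where xs: "walk_in X E xs" "hd xs = y" "last xs = x"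
      "dist_in X E y x = enat (length xs - 1)"
      by (rule dist_in_geodesicE)
    have "walk_in X E (rev xs)"
      using xs(1) assms by (auto simp: walk_in_iff_successively symp_def
          elim: successively_mono)
    from dist_in_le_walk[OF this] show ?thesis using xs by (simp add: hd_rev last_rev)
  qed simp
  show ?thesis by (rule order_antisym[OF le le])
qed

lemma dist_in_triangle: "dist_in X E u w \<le> dist_in X E u v + dist_in X E v w"
proof (cases "dist_in X E u v = \<infinity> \<or> dist_in X E v w = \<infinity>")
  case False
  then obtain xs ys where
    xs: "walk_in X E xs" "hd xs = u" "last xs = v" "dist_in X E u v = enat (length xs - 1)" and
    ys: "walk_in X E ys" "hd ys = v" "last ys = w" "dist_in X E v w = enat (length ys - 1)"
    by (metis dist_in_geodesicE)
  have "walk_in X E (xs @ tl ys)"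
    using xs ys unfolding walk_in_iff_successively
    by (cases ys) (auto simp: successively_append_iff successively_Cons)
  moreover have "hd (xs @ tl ys) = u" "last (xs @ tl ys) = w"
    using xs ys by (cases ys; auto simp: walk_in_iff_successively)+
  ultimately have "dist_in X E u w \<le> enat (length (xs @ tl ys) - 1)"
    using dist_in_le_walk by metis
  also have "\<dots> = dist_in X E u v + dist_in X E v w"
    using xs ys by (cases xs; cases ys) (auto simp: walk_in_iff_successively)
  finally show ?thesis .
qed auto

lemma dist_in_walk_nth:
  assumes "walk_in X E xs" "p < length xs"
  shows "dist_in X E (hd xs) (xs ! p) \<le> enat p"
    and "dist_in X E (xs ! p) (last xs) \<le> enat (length xs - 1 - p)"
proof -
  have "successively E (take (Suc p) xs)" "successively E (drop p xs)"
    using assms(1) successively_append_iff[of E "take (Suc p) xs" "drop (Suc p) xs"]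
      successively_append_iff[of E "take p xs" "drop p xs"]
    by (simp_all add: walk_in_iff_successively)
  then have pre: "walk_in X E (take (Suc p) xs)" and suf: "walk_in X E (drop p xs)"
    using assms by (auto simp: walk_in_iff_successively dest: in_set_takeD in_set_dropD)
  have "hd (take (Suc p) xs) = hd xs" by simp
  moreover have "last (take (Suc p) xs) = xs ! p"
    using assms(2) by (simp add: take_Suc_conv_app_nth)
  ultimately show "dist_in X E (hd xs) (xs ! p) \<le> enat p"
    using dist_in_le_walk[OF pre] assms(2) by simp
  have "hd (drop p xs) = xs ! p" using assms(2) by (simp add: hd_drop_conv_nth)
  then show "dist_in X E (xs ! p) (last xs) \<le> enat (length xs - 1 - p)"
    using dist_in_le_walk[OF suf] assms(2) by simp
qed

lemma geodesic_nth_dist_ge: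
  assumes "walk_in X E xs" "dist_in X E (hd xs) (last xs) = enat (length xs - 1)"
    and "p \<le> q" "q < length xs"
  shows "enat (q - p) \<le> dist_in X E (xs ! p) (xs ! q)"
proof (cases "dist_in X E (xs ! p) (xs ! q)")
  case (enat m)
  have "enat (length xs - 1) \<le>
      dist_in X E (hd xs) (xs ! p) + (dist_in X E (xs ! p) (xs ! q) + dist_in X E (xs ! q) (last xs))"
    unfolding assms(2)[symmetric] by (meson add_left_mono dist_in_triangle order_trans)
  also have "\<dots> \<le> enat p + (enat m + enat (length xs - 1 - q))"
    using dist_in_walk_nth[OF assms(1)] assms(3,4) enat by (intro add_mono) auto
  finally show ?thesis using assms(3,4) enat by simp
qed simp

lemma dist_in_split:
  assumes "dist_in X E u v \<le> enat (r + s)"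
  shows "\<exists>w. dist_in X E u w \<le> enat r \<and> dist_in X E w v \<le> enat s"
proof -
  obtain xs where xs: "walk_in X E xs" "hd xs = u" "last xs = v"
    "dist_in X E u v = enat (length xs - 1)"
    by (rule dist_in_geodesicE) (use assms enat_ile in blast)
  let ?p = "min r (length xs - 1)"
  have "?p < length xs" using xs(1) by (cases xs) (auto simp: walk_in_def)
  from dist_in_walk_nth[OF xs(1) this] have
    "dist_in X E u (xs ! ?p) \<le> enat ?p" "dist_in X E (xs ! ?p) v \<le> enat (length xs - 1 - ?p)"
    using xs(2,3) by simp_all
  moreover have "?p \<le> r" "length xs - 1 - ?p \<le> s" using xs(4) assms by auto
  ultimately show ?thesis by (meson enat_ord_simps(1) order_trans)
qed

lemma set_dist_le_enat_iff:
  "set_dist V E v X \<le> enat r \<longleftrightarrow> (\<exists>x\<in>X. dist_in V E v x \<le> enat r)"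
proof
  assume le: "set_dist V E v X \<le> enat r"
  then have "X \<noteq> {}" by (auto simp: set_dist_def top_enat_def)
  then have "set_dist V E v X \<in> dist_in V E v ` X"
    unfolding set_dist_def by (auto intro: wellorder_InfI)
  with le show "\<exists>x\<in>X. dist_in V E v x \<le> enat r" by auto
qed (auto simp: set_dist_def intro: INF_lower2)

definition thickening :: "'a set \<Rightarrow> ('a \<Rightarrow> 'a \<Rightarrow> bool) \<Rightarrow> nat \<Rightarrow> 'a set \<Rightarrow> 'a set" where
  "thickening V E r X = {v \<in> V. set_dist V E v X \<le> enat r}"

lemma mem_thickening_iff:
  "v \<in> thickening V E r X \<longleftrightarrow> v \<in> V \<and> (\<exists>x\<in>X. dist_in V E v x \<le> enat r)"
  by (simp add: thickening_def set_dist_le_enat_iff)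

lemma subset_thickening: "X \<subseteq> V \<Longrightarrow> X \<subseteq> thickening V E r X"
proof
  fix x assume "X \<subseteq> V" "x \<in> X"
  then have "x \<in> V" "dist_in V E x x \<le> enat r" by (auto simp: dist_in_refl zero_enat_def[symmetric])
  with \<open>x \<in> X\<close> show "x \<in> thickening V E r X" by (auto simp: mem_thickening_iff)
qed

lemma thickening_UN: "thickening V E r (\<Union>i\<in>I. X i) = (\<Union>i\<in>I. thickening V E r (X i))"
  by (auto simp: mem_thickening_iff) blast

text \<open>A shortest path to X of length at most r stays inside the r-thickening of X.\<close>
lemma dist_in_thickening_le:
  assumes "x \<in> X" "dist_in V E v x \<le> enat r"
  shows "dist_in (thickening V E r X) E v x \<le> dist_in V E v x"
proof -
  obtain xs where xs: "walk_in V E xs" "hd xs = v" "last xs = x"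
    "dist_in V E v x = enat (length xs - 1)"
    by (rule dist_in_geodesicE) (use assms(2) enat_ile in blast)
  have "set xs \<subseteq> thickening V E r X"
  proof
    fix y assume "y \<in> set xs"
    then obtain p where p: "p < length xs" "y = xs ! p" by (auto simp: in_set_conv_nth)
    have "dist_in V E y x \<le> enat (length xs - 1 - p)"
      using dist_in_walk_nth(2)[OF xs(1) p(1)] p(2) xs(3) by simp
    also have "\<dots> \<le> enat r" using xs(4) assms(2) by simp
    finally show "y \<in> thickening V E r X"
      using assms(1) xs(1) p by (auto simp: mem_thickening_iff walk_in_def)
  qed
  then have "walk_in (thickening V E r X) E xs" using xs(1) by (simp add: walk_in_def)
  from dist_in_le_walk[OF this] show ?thesis using xs by simp
qed

lemma dist_in_le_diam: "x \<in> X \<Longrightarrow> y \<in> X \<Longrightarrow> dist_in X E x y \<le> diam E X"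
  unfolding diam_def by (meson SUP_upper2 order_refl)

lemma dist_in_thickening_le_diam:
  assumes "symp E" "X \<subseteq> V" "thickening V E r X \<subseteq> T"
    and "x \<in> thickening V E r X" "y \<in> thickening V E r X"
  shows "dist_in T E x y \<le> diam E X + enat (2 * r)"
proof -
  obtain s t where st: "s \<in> X" "t \<in> X"
    and xs: "dist_in V E x s \<le> enat r" and yt: "dist_in V E y t \<le> enat r"
    using assms(4,5) by (auto simp: mem_thickening_iff)
  have in_T: "dist_in T E z w \<le> enat r" if "w \<in> X" "dist_in V E z w \<le> enat r" for z w
    using dist_in_antimono[OF assms(3)] dist_in_thickening_le[OF that] that(2)
    by (meson order_trans)
  have "X \<subseteq> T" using subset_thickening[OF assms(2)] assms(3) by blast
  have "dist_in T E x y \<le> dist_in T E x s + (dist_in T E s t + dist_in T E t y)"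
    by (meson add_left_mono dist_in_triangle order_trans)
  also have "\<dots> \<le> enat r + (diam E X + enat r)"
  proof (intro add_mono)
    show "dist_in T E x s \<le> enat r" by (rule in_T[OF st(1) xs])
    show "dist_in T E s t \<le> diam E X"
      using dist_in_antimono[OF \<open>X \<subseteq> T\<close>] dist_in_le_diam[OF st] by (rule order_trans)
    show "dist_in T E t y \<le> enat r"
      using in_T[OF st(2) yt] dist_in_commute[OF assms(1)] by simp
  qed
  also have "\<dots> = diam E X + enat (2 * r)" by (simp add: mult_2 ac_simps)
  finally show ?thesis .
qed

definition scattered :: "'a set \<Rightarrow> ('a \<Rightarrow> 'a \<Rightarrow> bool) \<Rightarrow> nat \<Rightarrow> 'a set \<Rightarrow> bool" where
  "scattered V E a Y \<longleftrightarrow> (\<forall>u\<in>Y. \<forall>v\<in>Y. u \<noteq> v \<longrightarrow> enat (2 * a) < dist_in V E u v)"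

lemma scattered_subset: "scattered V E a Y \<Longrightarrow> Z \<subseteq> Y \<Longrightarrow> scattered V E a Z"
  unfolding scattered_def by blast

lemma pack_num_eq_Max:
  "pack_num V E VD a X = Max (card ` {Y. Y \<subseteq> X \<inter> VD \<and> scattered V E a Y})"
  unfolding pack_num_def scattered_def by (rule arg_cong[where f = Max]) blast

lemma finite_card_scattered:
  "finite VD \<Longrightarrow> finite (card ` {Y. Y \<subseteq> X \<inter> VD \<and> scattered V E a Y})"
  by (rule finite_imageI, rule finite_subset[of _ "Pow VD"]) auto

lemma card_le_pack_num:
  assumes "finite VD" "Y \<subseteq> X \<inter> VD" "scattered V E a Y"
  shows "card Y \<le> pack_num V E VD a X"
  unfolding pack_num_eq_Max using assms finite_card_scattered[OF assms(1)] by (auto intro: Max_ge)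

lemma pack_num_witness:
  assumes "finite VD"
  obtains Y where "Y \<subseteq> X \<inter> VD" "scattered V E a Y" "card Y = pack_num V E VD a X"
proof -
  have "{} \<in> {Y. Y \<subseteq> X \<inter> VD \<and> scattered V E a Y}" by (simp add: scattered_def)
  then have "pack_num V E VD a X \<in> card ` {Y. Y \<subseteq> X \<inter> VD \<and> scattered V E a Y}"
    unfolding pack_num_eq_Max using finite_card_scattered[OF assms] by (intro Max_in) auto
  with that show ?thesis by auto
qed

lemma pack_num_UN_eq_sum:
  assumes "finite VD" "finite I" and XVD: "X \<inter> VD = (\<Union>i\<in>I. Xs i \<inter> VD)"
    and disj: "disjoint_family_on Xs I"
    and far: "\<And>i j u v. i \<in> I \<Longrightarrow> j \<in> I \<Longrightarrow> i \<noteq> j \<Longrightarrow> u \<in> Xs i \<inter> VD \<Longrightarrow> v \<in> Xs j \<inter> VD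
      \<Longrightarrow> enat (2 * a) < dist_in V E u v"
  shows "pack_num V E VD a X = (\<Sum>i\<in>I. pack_num V E VD a (Xs i))"
proof (rule order_antisym)
  obtain Y where Y: "Y \<subseteq> X \<inter> VD" "scattered V E a Y" "card Y = pack_num V E VD a X"
    using pack_num_witness[OF assms(1)] .
  have "Y = (\<Union>i\<in>I. Y \<inter> Xs i)" using Y(1) XVD by blast
  moreover have "finite Y" using Y(1) assms(1) finite_subset by blast
  moreover have "card (\<Union>i\<in>I. Y \<inter> Xs i) = (\<Sum>i\<in>I. card (Y \<inter> Xs i))"
    by (rule card_UN_disjoint)
      (use assms(2) \<open>finite Y\<close> disj in \<open>auto simp: disjoint_family_on_def\<close>)
  ultimately have "card Y = (\<Sum>i\<in>I. card (Y \<inter> Xs i))" by simp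
  also have "\<dots> \<le> (\<Sum>i\<in>I. pack_num V E VD a (Xs i))"
    using Y(1,2) by (intro sum_mono card_le_pack_num[OF assms(1)]) (auto elim: scattered_subset)
  finally show "pack_num V E VD a X \<le> (\<Sum>i\<in>I. pack_num V E VD a (Xs i))" using Y(3) by simp
next
  have "\<exists>Y. Y \<subseteq> Xs i \<inter> VD \<and> scattered V E a Y \<and> card Y = pack_num V E VD a (Xs i)" for i
    by (rule pack_num_witness[OF assms(1)]) blast
  then obtain Ys where Ys: "\<And>i. Ys i \<subseteq> Xs i \<inter> VD" "\<And>i. scattered V E a (Ys i)"
    "\<And>i. card (Ys i) = pack_num V E VD a (Xs i)"
    by metis
  have "finite (Ys i)" for i using Ys(1) assms(1) finite_subset by blast
  then have "card (\<Union>i\<in>I. Ys i) = (\<Sum>i\<in>I. card (Ys i))"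
    using Ys(1) disj assms(2) by (intro card_UN_disjoint) (auto simp: disjoint_family_on_def, blast)
  then have "(\<Sum>i\<in>I. pack_num V E VD a (Xs i)) = card (\<Union>i\<in>I. Ys i)" by (simp add: Ys(3))
  also have "\<dots> \<le> pack_num V E VD a X"
  proof (rule card_le_pack_num[OF assms(1)])
    show "(\<Union>i\<in>I. Ys i) \<subseteq> X \<inter> VD" using Ys(1) XVD by blast
    show "scattered V E a (\<Union>i\<in>I. Ys i)"
      unfolding scattered_def
    proof (intro ballI impI)
      fix u v assume "u \<in> (\<Union>i\<in>I. Ys i)" "v \<in> (\<Union>i\<in>I. Ys i)" "u \<noteq> v"
      then obtain i j where "i \<in> I" "j \<in> I" "u \<in> Ys i" "v \<in> Ys j" by blast
      then show "enat (2 * a) < dist_in V E u v"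
        using Ys(2)[of i] Ys(1)[of i] Ys(1)[of j] far[of i j u v] \<open>u \<noteq> v\<close>
        by (cases "i = j") (auto simp: scattered_def subset_iff)
    qed
  qed
  finally show "(\<Sum>i\<in>I. pack_num V E VD a (Xs i)) \<le> pack_num V E VD a X" .
qed

lemma card_le_Suc_if_spread_le:
  fixes A :: "nat set"
  assumes "finite A" and spread: "\<And>p q. p \<in> A \<Longrightarrow> q \<in> A \<Longrightarrow> p \<le> q \<Longrightarrow> q - p \<le> m"
  shows "card A \<le> Suc m"
proof (cases "A = {}")
  case False
  have "A \<subseteq> {Min A..Min A + m}"
    using spread[of "Min A"] Min_in[OF assms(1) False] Min_le[OF assms(1)] by fastforce
  then show ?thesis using card_mono[of "{Min A..Min A + m}" A] by simp
qed simp

lemma dist_in_plus_one_le_sum_cover: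
  assumes "finite I" and cover: "S \<subseteq> (\<Union>i\<in>I. B i)"
    and bounded: "\<And>i x y. i \<in> I \<Longrightarrow> x \<in> B i \<Longrightarrow> y \<in> B i \<Longrightarrow> dist_in S E x y \<le> d i"
    and "dist_in S E u v \<noteq> \<infinity>"
  shows "dist_in S E u v + 1 \<le> (\<Sum>i\<in>I. d i + 1)"
proof (cases "(\<Sum>i\<in>I. d i + 1) = \<infinity>")
  case False
  define m where "m i = the_enat (d i)" for i
  have d: "d i = enat (m i)" if "i \<in> I" for i
  proof -
    have "d i + 1 \<le> (\<Sum>i\<in>I. d i + 1)" by (rule member_le_sum[OF that _ assms(1)]) simp
    with False show ?thesis unfolding m_def by (cases "d i") auto
  qed
  obtain xs where xs: "walk_in S E xs" "hd xs = u" "last xs = v"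
    "dist_in S E u v = enat (length xs - 1)"
    using assms(4) by (rule dist_in_geodesicE)
  define A where "A i = {p. p < length xs \<and> xs ! p \<in> B i}" for i
  have cov: "{..<length xs} \<subseteq> (\<Union>i\<in>I. A i)"
    using xs(1) cover nth_mem by (fastforce simp: A_def walk_in_def)
  have "finite (\<Union>i\<in>I. A i)" using assms(1) by (simp add: A_def)
  from card_mono[OF this cov] have "length xs \<le> card (\<Union>i\<in>I. A i)" by simp
  also have "\<dots> \<le> (\<Sum>i\<in>I. card (A i))" using assms(1) by (rule card_UN_le)
  also have "\<dots> \<le> (\<Sum>i\<in>I. Suc (m i))"
  proof (rule sum_mono, rule card_le_Suc_if_spread_le)
    fix i p q assume i: "i \<in> I" and pq: "p \<in> A i" "q \<in> A i" "p \<le> q"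
    have "enat (q - p) \<le> dist_in S E (xs ! p) (xs ! q)"
      using geodesic_nth_dist_ge[OF xs(1)] xs pq by (simp add: A_def)
    also have "\<dots> \<le> enat (m i)" using bounded[OF i] pq d[OF i] by (simp add: A_def)
    finally show "q - p \<le> m i" by simp
  qed (simp add: A_def)
  finally have "length xs \<le> (\<Sum>i\<in>I. Suc (m i))" .
  moreover have "(\<Sum>i\<in>I. d i + 1) = enat (\<Sum>i\<in>I. Suc (m i))"
    unfolding of_nat_eq_enat[symmetric] of_nat_sum
    by (rule sum.cong) (simp_all add: d of_nat_eq_enat one_enat_def)
  moreover have "dist_in S E u v + 1 = enat (length xs)"
    using xs(1,4) by (cases xs) (simp_all add: walk_in_def one_enat_def)
  ultimately show ?thesis by simp
qed simp

lemma diam_plus_one_le_sum_cover: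
  assumes "finite I" "connected_in E S" "S \<subseteq> (\<Union>i\<in>I. B i)"
    and "\<And>i x y. i \<in> I \<Longrightarrow> x \<in> B i \<Longrightarrow> y \<in> B i \<Longrightarrow> dist_in S E x y \<le> d i"
  shows "diam E S + 1 \<le> (\<Sum>i\<in>I. d i + 1)"
proof -
  have "S \<noteq> {}" using assms(2) by (simp add: connected_in_def)
  then have "diam E S + 1 = (SUP x\<in>S. SUP y\<in>S. eSuc (dist_in S E x y))"
    by (simp add: diam_def plus_1_eSuc eSuc_Sup image_image)
  also have "\<dots> \<le> (\<Sum>i\<in>I. d i + 1)"
    using dist_in_plus_one_le_sum_cover[OF assms(1,3,4)] assms(2)
    by (intro SUP_least) (simp add: connected_in_def plus_1_eSuc)
  finally show ?thesis .
qed

lemma nbhd_subset_if_separated: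
  assumes "symp E" "disjoint_family_on Ss I"
    and sep: "\<forall>u\<in>VD. (\<exists>i\<in>I. nbhd V E a u \<subseteq> Ss i) \<or> nbhd V E a u \<inter> (\<Union>i\<in>I. Ss i) = {}"
    and "u \<in> VD" "i \<in> I" "x \<in> Ss i" "dist_in V E u x \<le> enat a"
  shows "nbhd V E a u \<subseteq> Ss i"
proof -
  have "x \<in> nbhd V E a u"
    using assms(7) dist_in_commute[OF assms(1)] by (simp add: nbhd_def)
  then obtain j where "j \<in> I" "nbhd V E a u \<subseteq> Ss j" using sep assms(4-6) by blast
  moreover from this have "j = i"
    using assms(2,5,6) \<open>x \<in> nbhd V E a u\<close> by (auto simp: disjoint_family_on_def)
  ultimately show ?thesis by simp
qed

lemma pack_num_thickening_eq_sum:
  assumes "symp E" "finite VD" "VD \<subseteq> V" "finite I"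
    and "\<And>i. i \<in> I \<Longrightarrow> Ss i \<subseteq> V" and disj: "disjoint_family_on Ss I"
    and sep: "\<forall>u\<in>VD. (\<exists>i\<in>I. nbhd V E a u \<subseteq> Ss i) \<or> nbhd V E a u \<inter> (\<Union>i\<in>I. Ss i) = {}"
  shows "pack_num V E VD a (thickening V E a (\<Union>i\<in>I. Ss i)) = (\<Sum>i\<in>I. pack_num V E VD a (Ss i))"
proof (rule pack_num_UN_eq_sum[OF assms(2,4) _ disj])
  note nbhd_sub = nbhd_subset_if_separated[OF assms(1) disj sep]
  have self: "u \<in> nbhd V E a u" if "u \<in> VD" for u
    using that assms(3) by (auto simp: nbhd_def dist_in_refl zero_enat_def[symmetric])
  have own: "nbhd V E a u \<subseteq> Ss i" if "u \<in> VD" "i \<in> I" "u \<in> Ss i" for u i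
    using nbhd_sub[OF that] self[OF that(1)] by (simp add: nbhd_def)
  show "thickening V E a (\<Union>i\<in>I. Ss i) \<inter> VD = (\<Union>i\<in>I. Ss i \<inter> VD)"
  proof
    show "thickening V E a (\<Union>i\<in>I. Ss i) \<inter> VD \<subseteq> (\<Union>i\<in>I. Ss i \<inter> VD)"
      using nbhd_sub self by (fastforce simp: mem_thickening_iff)
    show "(\<Union>i\<in>I. Ss i \<inter> VD) \<subseteq> thickening V E a (\<Union>i\<in>I. Ss i) \<inter> VD"
      using subset_thickening[of "\<Union>i\<in>I. Ss i" V E a] assms(5) by blast
  qed
  fix i j u v
  assume ij: "i \<in> I" "j \<in> I" "i \<noteq> j" and u: "u \<in> Ss i \<inter> VD" and v: "v \<in> Ss j \<inter> VD"
  show "enat (2 * a) < dist_in V E u v"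
  proof (rule ccontr)
    assume "\<not> ?thesis"
    then have "dist_in V E u v \<le> enat (a + a)" by (simp add: mult_2)
    then obtain w where "dist_in V E u w \<le> enat a" "dist_in V E w v \<le> enat a"
      using dist_in_split by meson
    then have "w \<in> nbhd V E a u" "w \<in> nbhd V E a v"
      using dist_in_commute[OF assms(1)] by (auto simp: nbhd_def)
    then have "w \<in> Ss i \<inter> Ss j" using own ij u v by blast
    with disj ij show False by (auto simp: disjoint_family_on_def)
  qed
qed

lemma diam_thickening_plus_one_le_sum:
  assumes "symp E" "finite I" "\<And>i. i \<in> I \<Longrightarrow> Ss i \<subseteq> V"
    and "connected_in E (thickening V E r (\<Union>i\<in>I. Ss i))"
  shows "diam E (thickening V E r (\<Union>i\<in>I. Ss i)) + 1 \<le> (\<Sum>i\<in>I. diam E (Ss i) + enat (2 * r + 1))"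
proof -
  let ?S = "thickening V E r (\<Union>i\<in>I. Ss i)"
  have "diam E ?S + 1 \<le> (\<Sum>i\<in>I. diam E (Ss i) + enat (2 * r) + 1)"
  proof (rule diam_plus_one_le_sum_cover[OF assms(2,4)])
    show "?S \<subseteq> (\<Union>i\<in>I. thickening V E r (Ss i))" by (simp add: thickening_UN)
    fix i x y assume "i \<in> I" "x \<in> thickening V E r (Ss i)" "y \<in> thickening V E r (Ss i)"
    then show "dist_in ?S E x y \<le> diam E (Ss i) + enat (2 * r)"
      by (intro dist_in_thickening_le_diam[OF assms(1) assms(3)]) (auto simp: thickening_UN)
  qed
  also have "\<dots> = (\<Sum>i\<in>I. diam E (Ss i) + enat (2 * r + 1))"
    by (simp add: add.assoc one_enat_def)
  finally show ?thesis .
qed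

theorem lemmaB7:
  fixes V :: "'a set" and E :: "'a \<Rightarrow> 'a \<Rightarrow> bool" and a k :: nat
    and VD :: "'a set" and Ss :: "nat \<Rightarrow> 'a set"
  assumes G: "graph V E"
    and a_pos: "a > 0"
    and VD_sub: "VD \<subseteq> V"
    and Ss_sub: "\<forall>i \<in> {1..k}. Ss i \<subseteq> V"
    and Ss_ne: "\<forall>i \<in> {1..k}. Ss i \<noteq> {}"
    and Ss_disj: "\<forall>i \<in> {1..k}. \<forall>j \<in> {1..k}. i \<noteq> j \<longrightarrow> Ss i \<inter> Ss j = {}"
    and sep: "\<forall>u \<in> VD. (\<exists>i \<in> {1..k}. nbhd V E a u \<subseteq> Ss i)
                  \<or> nbhd V E a u \<inter> (\<Union>i \<in> {1..k}. Ss i) = {}"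
    and S_def: "S = {v \<in> V. set_dist V E v (\<Union>i \<in> {1..k}. Ss i) \<le> enat a}"
    and conn: "connected_in E S"
  shows "pack_num V E VD a S = (\<Sum>i = 1..k. pack_num V E VD a (Ss i))
       \<and> diam E S + 1 \<le> (\<Sum>i = 1..k. diam E (Ss i) + enat (2 * a + 1))"
proof -
  have S: "S = thickening V E a (\<Union>i\<in>{1..k}. Ss i)" using S_def by (simp add: thickening_def)
  have "symp E" "finite VD"
    using G VD_sub finite_subset by (auto simp: graph_def symp_def)
  moreover have "disjoint_family_on Ss {1..k}" using Ss_disj by (simp add: disjoint_family_on_def)
  ultimately show ?thesis
    unfolding S using pack_num_thickening_eq_sum[OF _ _ VD_sub _ _ _ sep]
      diam_thickening_plus_one_le_sum[of E "{1..k}" Ss V a] Ss_sub conn[unfolded S] by simp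
qed

end
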